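(* Let $\mathrm{AND}:\{0,1\}\times\{0,1\}\to\{0,1\}$ be the two-bit AND function. There exist absolute constants $c,C,\epsilon_0>0$ such that for all $0<\epsilon\le\epsilon_0$, \[ c\,\epsilon^2\le \mathrm{IC}(\mathrm{AND},1/2-\epsilon)\le C\epsilon^2\quad\text{and}\quad c\,\epsilon^2\le \mathrm{IC}^{\mathrm{ext}}(\mathrm{AND},1/2-\epsilon)\le C\epsilon^2 . \]
   Context: Two-party communication model: Alice gets $x$, Bob gets $y$; a protocol $\pi$ may use public and private randomness; the transcript $\Pi$ consists of the public random string together with all transmitted bits, and the protocol outputs a value $\pi(x,y)$ determined by the transcript. Logarithms base 2. For a distribution $\mu$ on inputs with $(X,Y)\sim\mu$: $\mathrm{IC}_\mu(\pi)=I(\Pi;X\mid Y)+I(\Pi;Y\mid X)$, $\mathrm{IC}^{\mathrm{ext}}_\mu(\pi)=I(\Pi;XY)$. A protocol performs $[f,\eta]$ if $\Pr[\pi(x,y)\ne f(x,y)]\le\eta$ for every input $(x,y)$. $\mathrm{IC}_\mu(f,\eta)=\inf\{\mathrm{IC}_\mu(\pi):\pi\text{ performs }[f,\eta]\}$, similarly $\mathrm{IC}^{\mathrm{ext}}_\mu(f,\eta)$; $\mathrm{IC}(f,\eta)=\sup_\mu\mathrm{IC}_\mu(f,\eta)$ and $\mathrm{IC}^{\mathrm{ext}}(f,\eta)=\sup_\mu\mathrm{IC}^{\mathrm{ext}}_\mu(f,\eta)$ over all distributions $\mu$ on $\{0,1\}\times\{0,1\}$. *)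

theory Defs
  imports "HOL-Probability.Probability"
begin

text \<open>Two-party randomized protocols on one-bit inputs (bool: False = 0, True = 1).
  Public randomness r, Alice's private randomness ra, Bob's private randomness rb are
  independent, finitely supported random variables (encoded in nat).
  At each step the speaker (or halting) is determined by the public string and the bits
  sent so far; the speaker's bit is a deterministic function of her input, the public
  string, her private string and the bits so far.\<close>

datatype party = Alice | Bob

record protocol =
  p_pub   :: "nat pmf"
  p_privA :: "nat pmf"
  p_privB :: "nat pmf"
  p_speaker :: "nat \<Rightarrow> bool list \<Rightarrow> party option"
  p_msgA :: "bool \<Rightarrow> nat \<Rightarrow> nat \<Rightarrow> bool list \<Rightarrow> bool"
  p_msgB :: "bool \<Rightarrow> nat \<Rightarrow> nat \<Rightarrow> bool list \<Rightarrow> bool"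
  p_out :: "nat \<Rightarrow> bool list \<Rightarrow> bool"
  p_len :: nat

definition valid_protocol :: "protocol \<Rightarrow> bool" where
  "valid_protocol P \<longleftrightarrow> finite (set_pmf (p_pub P)) \<and> finite (set_pmf (p_privA P))
     \<and> finite (set_pmf (p_privB P))"

fun run_bits :: "protocol \<Rightarrow> bool \<Rightarrow> bool \<Rightarrow> nat \<Rightarrow> nat \<Rightarrow> nat \<Rightarrow> nat \<Rightarrow> bool list \<Rightarrow> bool list" where
  "run_bits P x y r ra rb 0 h = h"
| "run_bits P x y r ra rb (Suc n) h =
     (case p_speaker P r h of
        None \<Rightarrow> h
      | Some Alice \<Rightarrow> run_bits P x y r ra rb n (h @ [p_msgA P x r ra h])
      | Some Bob \<Rightarrow> run_bits P x y r ra rb n (h @ [p_msgB P y r rb h]))"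

definition transcript :: "protocol \<Rightarrow> bool \<Rightarrow> bool \<Rightarrow> (nat \<times> bool list) pmf" where
  "transcript P x y =
     do { r \<leftarrow> p_pub P; ra \<leftarrow> p_privA P; rb \<leftarrow> p_privB P;
          return_pmf (r, run_bits P x y r ra rb (p_len P) []) }"

definition output_of :: "protocol \<Rightarrow> nat \<times> bool list \<Rightarrow> bool" where
  "output_of P t = p_out P (fst t) (snd t)"

definition performs :: "protocol \<Rightarrow> (bool \<Rightarrow> bool \<Rightarrow> bool) \<Rightarrow> real \<Rightarrow> bool" where
  "performs P f eta \<longleftrightarrow>
     (\<forall>x y. measure_pmf.prob (transcript P x y) {t. output_of P t \<noteq> f x y} \<le> eta)"

definition joint :: "(bool \<times> bool) pmf \<Rightarrow> protocol \<Rightarrow> (bool \<times> bool \<times> (nat \<times> bool list)) pmf" where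
  "joint mu P = do { (x, y) \<leftarrow> mu; t \<leftarrow> transcript P x y; return_pmf (x, y, t) }"

definition MI :: "'a pmf \<Rightarrow> ('a \<Rightarrow> 'b) \<Rightarrow> ('a \<Rightarrow> 'c) \<Rightarrow> real" where
  "MI M A B = prob_space.mutual_information (measure_pmf M) 2 (count_space UNIV) (count_space UNIV) A B"

definition CMI :: "'a pmf \<Rightarrow> ('a \<Rightarrow> 'b) \<Rightarrow> ('a \<Rightarrow> 'c) \<Rightarrow> ('a \<Rightarrow> 'd) \<Rightarrow> real" where
  "CMI M A B C = prob_space.conditional_mutual_information (measure_pmf M) 2
      (count_space UNIV) (count_space UNIV) (count_space UNIV) A B C"

definition rvX :: "bool \<times> bool \<times> (nat \<times> bool list) \<Rightarrow> bool" where "rvX w = fst w"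
definition rvY :: "bool \<times> bool \<times> (nat \<times> bool list) \<Rightarrow> bool" where "rvY w = fst (snd w)"
definition rvPi :: "bool \<times> bool \<times> (nat \<times> bool list) \<Rightarrow> nat \<times> bool list" where "rvPi w = snd (snd w)"

definition IC_prot :: "(bool \<times> bool) pmf \<Rightarrow> protocol \<Rightarrow> real" where
  "IC_prot mu P = CMI (joint mu P) rvPi rvX rvY + CMI (joint mu P) rvPi rvY rvX"

definition ICext_prot :: "(bool \<times> bool) pmf \<Rightarrow> protocol \<Rightarrow> real" where
  "ICext_prot mu P = MI (joint mu P) rvPi (\<lambda>w. (rvX w, rvY w))"

definition IC_mu :: "(bool \<times> bool) pmf \<Rightarrow> (bool \<Rightarrow> bool \<Rightarrow> bool) \<Rightarrow> real \<Rightarrow> ereal" where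
  "IC_mu mu f eta = (INF P \<in> {P. valid_protocol P \<and> performs P f eta}. ereal (IC_prot mu P))"

definition ICext_mu :: "(bool \<times> bool) pmf \<Rightarrow> (bool \<Rightarrow> bool \<Rightarrow> bool) \<Rightarrow> real \<Rightarrow> ereal" where
  "ICext_mu mu f eta = (INF P \<in> {P. valid_protocol P \<and> performs P f eta}. ereal (ICext_prot mu P))"

definition IC :: "(bool \<Rightarrow> bool \<Rightarrow> bool) \<Rightarrow> real \<Rightarrow> ereal" where
  "IC f eta = (SUP mu. IC_mu mu f eta)"

definition ICext :: "(bool \<Rightarrow> bool \<Rightarrow> bool) \<Rightarrow> real \<Rightarrow> ereal" where
  "ICext f eta = (SUP mu. ICext_mu mu f eta)"

definition AND2 :: "bool \<Rightarrow> bool \<Rightarrow> bool" where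
  "AND2 x y = (x \<and> y)"

end

theory Submission
  imports Defs
begin

text \<open>Upper bound: let each party send a single noisy bit whose bias depends on its input only
  up to a factor \<open>1 + O(\<epsilon>)\<close>, and the output is the AND of the two bits. So every
  transcript has the same probability under all four inputs up to a factor \<open>1 + 48\<epsilon>\<close>, and the
  bound of the Kullback--Leibler divergence by the \<open>\<chi>\<^sup>2\<close>-divergence makes the information the
  transcript reveals about the inputs \<open>O(\<epsilon>\<^sup>2)\<close>, for every prior.

  Lower bound: under the uniform prior, \<open>I(\<Pi>; X | Y)\<close> is a quarter of the sum over \<open>y\<close> of twice the
  Jensen--Shannon divergence between the transcript distributions on inputs \<open>(0, y)\<close> and \<open>(1, y)\<close>.
  A protocol with error \<open>1/2 - \<epsilon>\<close> accepts \<open>(1, 1)\<close> with probability at least \<open>1/2 + \<epsilon>\<close> and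
  \<open>(0, 1)\<close> with probability at most \<open>1/2 - \<epsilon>\<close>; a Pinsker-type bound for the Jensen--Shannon
  divergence turns this gap into \<open>I(\<Pi>; X | Y) \<ge> \<epsilon>\<^sup>2/8\<close>, which bounds both \<open>IC\<close> and \<open>IC\<^sup>e\<^sup>x\<^sup>t\<close>
  from below.\<close>

section \<open>Information measures of finitely supported distributions\<close>

lemma count_space_prod_UNIV:
  "count_space (UNIV::'a::countable set) \<Otimes>\<^sub>M count_space (UNIV::'b::countable set) = count_space UNIV"
  by (simp add: pair_measure_countable)

lemma distributed_measure_pmf:
  "distributed (measure_pmf M) (count_space UNIV) X (\<lambda>x. ennreal (pmf (map_pmf X M) x))"
proof -
  have "distr (measure_pmf M) (count_space UNIV) X = measure_pmf (map_pmf X M)"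
    by (simp add: map_pmf_rep_eq)
  also have "\<dots> = density (count_space UNIV) (\<lambda>x. ennreal (pmf (map_pmf X M) x))"
    by (rule measure_pmf_eq_density)
  finally show ?thesis
    unfolding distributed_def by simp
qed

lemma integral_count_space_eq_sum:
  fixes f :: "'a \<Rightarrow> real"
  assumes "finite S" "\<And>x. x \<notin> S \<Longrightarrow> f x = 0"
  shows "integral\<^sup>L (count_space UNIV) f = sum f S"
proof -
  have "finite {x \<in> UNIV. f x \<noteq> 0}"
    using assms by (metis (mono_tags) finite_subset mem_Collect_eq subsetI)
  then have "integral\<^sup>L (count_space UNIV) f = (\<Sum>x | x \<in> UNIV \<and> f x \<noteq> 0. f x)"
    by (rule lebesgue_integral_count_space_finite_support)
  also have "\<dots> = sum f S"
    using assms by (intro sum.mono_neutral_left) auto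
  finally show ?thesis .
qed

lemma integrable_count_space_finite_support:
  fixes f :: "'a \<Rightarrow> real"
  assumes "finite S" "\<And>x. x \<notin> S \<Longrightarrow> f x = 0"
  shows "integrable (count_space UNIV) f"
proof -
  have f_eq: "f = (\<lambda>x. \<Sum>s\<in>S. indicator {s} x * f s)"
  proof
    show "f x = (\<Sum>s\<in>S. indicator {s} x * f s)" for x
      using assms by (cases "x \<in> S") (simp_all add: indicator_def if_distrib[of "\<lambda>c. c * _"]
        Int_insert_right cong: if_cong)
  qed
  show ?thesis
    by (subst f_eq) (intro Bochner_Integration.integrable_sum, simp)
qed

lemma information_space_measure_pmf: "information_space (measure_pmf M) 2"
  by (simp add: information_space_def information_space_axioms_def prob_space_measure_pmf)

lemma finite_entropy_measure_pmf:
  fixes X :: "'a \<Rightarrow> 'b::countable"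
  assumes "finite (set_pmf M)"
  shows "information_space.finite_entropy (measure_pmf M) 2 (count_space UNIV) X (pmf (map_pmf X M))"
proof -
  interpret information_space "measure_pmf M" 2
    by (rule information_space_measure_pmf)
  have "integrable (count_space UNIV) (\<lambda>x. pmf (map_pmf X M) x * log 2 (pmf (map_pmf X M) x))"
    by (rule integrable_count_space_finite_support[of "X ` set_pmf M"])
       (use assms in \<open>auto simp: pmf_eq_0_set_pmf\<close>)
  then show ?thesis
    unfolding finite_entropy_def using distributed_measure_pmf by auto
qed

lemma
  fixes M :: "'a pmf" and A :: "'a \<Rightarrow> 'b::countable" and B :: "'a \<Rightarrow> 'c::countable"
  assumes fin: "finite (set_pmf M)"
  defines "Pab \<equiv> pmf (map_pmf (\<lambda>w. (A w, B w)) M)"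
    and "Pa \<equiv> pmf (map_pmf A M)" and "Pb \<equiv> pmf (map_pmf B M)"
  shows MI_eq_sum: "MI M A B = (\<Sum>(a, b)\<in>(\<lambda>w. (A w, B w)) ` set_pmf M.
      Pab (a, b) * log 2 (Pab (a, b) / (Pa a * Pb b)))"
    and MI_nonneg: "0 \<le> MI M A B"
proof -
  interpret information_space "measure_pmf M" 2
    by (rule information_space_measure_pmf)
  have sf: "sigma_finite_measure (count_space (UNIV::'b set))"
    "sigma_finite_measure (count_space (UNIV::'c set))"
    by (auto intro!: sigma_finite_measure_count_space)
  have Pab: "distributed (measure_pmf M) (count_space UNIV \<Otimes>\<^sub>M count_space UNIV)
      (\<lambda>w. (A w, B w)) (\<lambda>p. ennreal (Pab p))"
    unfolding count_space_prod_UNIV Pab_def by (rule distributed_measure_pmf)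
  define f where "f = (\<lambda>p. Pab p * log 2 (Pab p / (Pa (fst p) * Pb (snd p))))"
  have f0: "f p = 0" if "p \<notin> (\<lambda>w. (A w, B w)) ` set_pmf M" for p
    using that by (auto simp: f_def Pab_def pmf_eq_0_set_pmf split: prod.split)
  have finI: "finite ((\<lambda>w. (A w, B w)) ` set_pmf M)"
    using fin by simp
  note MI = mutual_information_distr[OF sf distributed_measure_pmf _ distributed_measure_pmf _ Pab]
  note nonneg = mutual_information_nonneg[OF sf distributed_measure_pmf _ distributed_measure_pmf _ Pab]
  have "MI M A B = integral\<^sup>L (count_space UNIV) f"
    using MI unfolding MI_def f_def count_space_prod_UNIV Pa_def Pb_def by (simp add: Pab_def)
  also have "\<dots> = (\<Sum>p\<in>(\<lambda>w. (A w, B w)) ` set_pmf M. f p)"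
    by (rule integral_count_space_eq_sum[OF finI f0])
  finally show "MI M A B = (\<Sum>(a, b)\<in>(\<lambda>w. (A w, B w)) ` set_pmf M.
      Pab (a, b) * log 2 (Pab (a, b) / (Pa a * Pb b)))"
    by (simp add: f_def split_def)
  have "integrable (count_space UNIV \<Otimes>\<^sub>M count_space UNIV) f"
    unfolding count_space_prod_UNIV by (rule integrable_count_space_finite_support[OF finI f0])
  then show "0 \<le> MI M A B"
    using nonneg unfolding MI_def f_def Pa_def Pb_def by (simp add: Pab_def)
qed

lemma
  fixes M :: "'a pmf" and A :: "'a \<Rightarrow> 'b::countable"
    and B :: "'a \<Rightarrow> 'c::countable" and C :: "'a \<Rightarrow> 'd::countable"
  assumes fin: "finite (set_pmf M)"
  defines "Pabc \<equiv> pmf (map_pmf (\<lambda>w. (A w, B w, C w)) M)"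
    and "Pac \<equiv> pmf (map_pmf (\<lambda>w. (A w, C w)) M)"
    and "Pbc \<equiv> pmf (map_pmf (\<lambda>w. (B w, C w)) M)"
    and "Pc \<equiv> pmf (map_pmf C M)"
  shows CMI_eq_sum: "CMI M A B C = (\<Sum>(a, b, c)\<in>(\<lambda>w. (A w, B w, C w)) ` set_pmf M.
      Pabc (a, b, c) * log 2 (Pabc (a, b, c) / (Pac (a, c) * (Pbc (b, c) / Pc c))))"
    and CMI_nonneg: "0 \<le> CMI M A B C"
proof -
  interpret information_space "measure_pmf M" 2
    by (rule information_space_measure_pmf)
  have sf: "sigma_finite_measure (count_space (UNIV::'b set))"
    "sigma_finite_measure (count_space (UNIV::'c set))"
    "sigma_finite_measure (count_space (UNIV::'d set))"
    by (auto intro!: sigma_finite_measure_count_space)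
  note fe = finite_entropy_measure_pmf[OF fin]
  note generic = conditional_mutual_information_generic_eq'[OF sf fe fe,
      unfolded count_space_prod_UNIV, OF fe fe fe]
    conditional_mutual_information_generic_nonneg'[OF sf fe fe,
      unfolded count_space_prod_UNIV, OF fe fe fe]
  have finI: "finite ((\<lambda>w. (A w, B w, C w)) ` set_pmf M)"
    using fin by simp
  show "CMI M A B C = (\<Sum>(a, b, c)\<in>(\<lambda>w. (A w, B w, C w)) ` set_pmf M.
      Pabc (a, b, c) * log 2 (Pabc (a, b, c) / (Pac (a, c) * (Pbc (b, c) / Pc c))))"
    unfolding CMI_def generic(1) count_space_prod_UNIV assms
    by (rule integral_count_space_eq_sum[OF finI]) (auto simp: pmf_eq_0_set_pmf)
  show "0 \<le> CMI M A B C"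
    unfolding CMI_def by (rule generic(2))
qed

lemma CMI_le_MI:
  fixes A :: "'a \<Rightarrow> 'b::countable" and B :: "'a \<Rightarrow> 'c::countable" and C :: "'a \<Rightarrow> 'd::countable"
  assumes "finite (set_pmf M)"
  shows "CMI M A B C \<le> MI M A (\<lambda>w. (B w, C w))"
proof -
  have "CMI M A B C = MI M A (\<lambda>w. (B w, C w)) - MI M A C"
    unfolding CMI_def MI_def
      prob_space.conditional_mutual_information_def[OF prob_space_measure_pmf]
    by (simp only: count_space_prod_UNIV)
  then show ?thesis
    using MI_nonneg[OF assms, of A C] by linarith
qed

lemma pmf_map_eq_sum:
  assumes "finite S" "set_pmf p \<subseteq> S"
  shows "pmf (map_pmf f p) x = (\<Sum>y\<in>{y\<in>S. f y = x}. pmf p y)"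
proof -
  have "pmf (map_pmf f p) x = measure p (f -` {x} \<inter> set_pmf p)"
    by (simp add: pmf_map measure_Int_set_pmf)
  also have "f -` {x} \<inter> set_pmf p = {y\<in>S. f y = x} \<inter> set_pmf p"
    using assms by auto
  also have "measure p \<dots> = (\<Sum>y\<in>{y\<in>S. f y = x}. pmf p y)"
    using assms(1) by (simp add: measure_Int_set_pmf measure_measure_pmf_finite)
  finally show ?thesis .
qed

lemma pmf_map_eq_sum_joint:
  fixes T :: "'a \<Rightarrow> 't" and Z :: "'a \<Rightarrow> 'z"
  assumes "finite (set_pmf M)"
  shows "pmf (map_pmf T M) t = (\<Sum>z\<in>Z ` set_pmf M. pmf (map_pmf (\<lambda>w. (T w, Z w)) M) (t, z))"
proof -
  let ?S = "insert t (T ` set_pmf M) \<times> Z ` set_pmf M"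
  have "map_pmf T M = map_pmf fst (map_pmf (\<lambda>w. (T w, Z w)) M)"
    by (simp add: pmf.map_comp o_def)
  then have "pmf (map_pmf T M) t = (\<Sum>y\<in>{y\<in>?S. fst y = t}. pmf (map_pmf (\<lambda>w. (T w, Z w)) M) y)"
    by (simp only:) (rule pmf_map_eq_sum, use assms in auto)
  also have "{y\<in>?S. fst y = t} = Pair t ` Z ` set_pmf M"
    by auto
  also have "(\<Sum>y\<in>Pair t ` Z ` set_pmf M. pmf (map_pmf (\<lambda>w. (T w, Z w)) M) y)
      = (\<Sum>z\<in>Z ` set_pmf M. pmf (map_pmf (\<lambda>w. (T w, Z w)) M) (t, z))"
    by (subst sum.reindex) (auto simp: inj_on_def)
  finally show ?thesis .
qed

lemma sum_weighted_sq_le_of_ratio_bounded: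
  fixes w c :: "'z \<Rightarrow> real"
  assumes fin: "finite Zs" and w: "\<And>z. z \<in> Zs \<Longrightarrow> 0 \<le> w z" "(\<Sum>z\<in>Zs. w z) = 1"
    and mean: "m = (\<Sum>z\<in>Zs. w z * c z)" and "0 \<le> \<kappa>"
    and ratio: "\<And>z z'. z \<in> Zs \<Longrightarrow> z' \<in> Zs \<Longrightarrow> c z \<le> (1 + \<kappa>) * c z'"
  shows "(\<Sum>z\<in>Zs. w z * (c z)\<^sup>2) \<le> (1 + \<kappa>\<^sup>2) * m\<^sup>2"
proof -
  have dev: "\<bar>c z - m\<bar> \<le> \<kappa> * m" if z: "z \<in> Zs" for z
  proof -
    have "c z = (\<Sum>z'\<in>Zs. w z' * c z)"
      using w(2) by (simp add: sum_distrib_right[symmetric])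
    also have "\<dots> \<le> (\<Sum>z'\<in>Zs. w z' * ((1 + \<kappa>) * c z'))"
      by (intro sum_mono mult_left_mono ratio z w)
    finally have up: "c z \<le> (1 + \<kappa>) * m"
      unfolding mean by (simp add: sum_distrib_left algebra_simps)
    have "m \<le> (\<Sum>z'\<in>Zs. w z' * ((1 + \<kappa>) * c z))"
      unfolding mean by (intro sum_mono mult_left_mono ratio z w)
    also have "\<dots> = (1 + \<kappa>) * c z"
      using w(2) by (simp add: sum_distrib_right[symmetric])
    finally have lo: "m \<le> (1 + \<kappa>) * c z" .
    show ?thesis
      using up lo \<open>0 \<le> \<kappa>\<close> mult_left_mono[of "c z" m \<kappa>] by (cases "c z \<le> m") (auto simp: algebra_simps)
  qed
  have "(\<Sum>z\<in>Zs. w z * (c z - m)\<^sup>2) = (\<Sum>z\<in>Zs. w z * (c z)\<^sup>2 - 2 * m * (w z * c z) + m\<^sup>2 * w z)"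
    by (intro sum.cong) (auto simp: power2_eq_square algebra_simps)
  also have "\<dots> = (\<Sum>z\<in>Zs. w z * (c z)\<^sup>2) - m\<^sup>2"
    by (simp add: sum.distrib sum_subtractf sum_distrib_left[symmetric] mean[symmetric] w(2)
        power2_eq_square)
  finally have "(\<Sum>z\<in>Zs. w z * (c z)\<^sup>2) = (\<Sum>z\<in>Zs. w z * (c z - m)\<^sup>2) + m\<^sup>2"
    by simp
  also have "\<dots> \<le> (\<Sum>z\<in>Zs. w z * (\<kappa> * m)\<^sup>2) + m\<^sup>2"
    using power_mono[OF dev abs_ge_zero, of _ 2] w(1)
    by (intro add_right_mono sum_mono mult_left_mono) simp_all
  also have "\<dots> = (1 + \<kappa>\<^sup>2) * m\<^sup>2"
    using w(2) by (simp add: sum_distrib_right[symmetric] algebra_simps)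
  finally show ?thesis .
qed

lemma MI_le_chi_square:
  fixes M :: "'a pmf" and T :: "'a \<Rightarrow> 't::countable" and Z :: "'a \<Rightarrow> 'z::countable"
  assumes fin: "finite (set_pmf M)"
  defines "pTZ \<equiv> pmf (map_pmf (\<lambda>w. (T w, Z w)) M)"
    and "pT \<equiv> pmf (map_pmf T M)" and "pZ \<equiv> pmf (map_pmf Z M)"
  shows "MI M T Z \<le>
    ((\<Sum>t\<in>T ` set_pmf M. \<Sum>z\<in>Z ` set_pmf M. (pTZ (t, z))\<^sup>2 / (pT t * pZ z)) - 1) / ln 2"
proof -
  define IM where "IM = (\<lambda>w. (T w, Z w)) ` set_pmf M"
  define g where "g = (\<lambda>(t, z). (pTZ (t, z))\<^sup>2 / (pT t * pZ z))"
  have pos: "0 < pTZ p" "0 < pT (fst p) * pZ (snd p)" if "p \<in> IM" for p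
    using that by (auto simp: IM_def pTZ_def pT_def pZ_def pmf_positive)
  have "MI M T Z = (\<Sum>(t, z)\<in>IM. pTZ (t, z) * log 2 (pTZ (t, z) / (pT t * pZ z)))"
    unfolding MI_eq_sum[OF fin] IM_def pTZ_def pT_def pZ_def ..
  also have "\<dots> \<le> (\<Sum>p\<in>IM. (g p - pTZ p) / ln 2)"
  proof (intro sum_mono)
    fix p assume p: "p \<in> IM"
    obtain t z where [simp]: "p = (t, z)" by fastforce
    define r where "r = pTZ p / (pT t * pZ z)"
    have "0 < r"
      using pos[OF p] by (simp add: r_def)
    then have "log 2 r \<le> (r - 1) / ln 2"
      using ln_le_minus_one[of r] by (simp add: log_def divide_right_mono)
    then have "pTZ p * log 2 r \<le> pTZ p * ((r - 1) / ln 2)"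
      using pos[OF p] by (intro mult_left_mono) auto
    also have "\<dots> = (g p - pTZ p) / ln 2"
      using pos[OF p] by (simp add: g_def r_def field_simps power2_eq_square)
    finally show "(case p of (t, z) \<Rightarrow> pTZ (t, z) * log 2 (pTZ (t, z) / (pT t * pZ z)))
        \<le> (g p - pTZ p) / ln 2"
      by (simp add: r_def)
  qed
  also have "\<dots> = ((\<Sum>p\<in>IM. g p) - 1) / ln 2"
    using fin unfolding IM_def pTZ_def
    by (simp add: sum_divide_distrib[symmetric] sum_subtractf sum_pmf_eq_1)
  also have "(\<Sum>p\<in>IM. g p) = (\<Sum>p\<in>T ` set_pmf M \<times> Z ` set_pmf M. g p)"
    using fin by (intro sum.mono_neutral_left)
      (auto simp: IM_def g_def pTZ_def pmf_eq_0_set_pmf)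
  finally show ?thesis
    by (simp add: sum.cartesian_product g_def)
qed

lemma MI_le_of_conditional_ratio:
  fixes M :: "'a pmf" and T :: "'a \<Rightarrow> 't::countable" and Z :: "'a \<Rightarrow> 'z::countable"
  assumes fin: "finite (set_pmf M)" and "0 \<le> \<kappa>"
    and ratio: "\<And>t z z'. z \<in> Z ` set_pmf M \<Longrightarrow> z' \<in> Z ` set_pmf M \<Longrightarrow>
       pmf (map_pmf (\<lambda>w. (T w, Z w)) M) (t, z) * pmf (map_pmf Z M) z'
         \<le> (1 + \<kappa>) * (pmf (map_pmf (\<lambda>w. (T w, Z w)) M) (t, z') * pmf (map_pmf Z M) z)"
  shows "MI M T Z \<le> \<kappa>\<^sup>2 / ln 2"
proof -
  define Ts Zs where "Ts = T ` set_pmf M" and "Zs = Z ` set_pmf M"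
  define pTZ pT pZ where "pTZ = pmf (map_pmf (\<lambda>w. (T w, Z w)) M)"
    and "pT = pmf (map_pmf T M)" and "pZ = pmf (map_pmf Z M)"
  have finZ: "finite Zs"
    using fin by (simp add: Zs_def)
  have pT_pos: "0 < pT t" if "t \<in> Ts" for t
    using that by (auto simp: Ts_def pT_def pmf_positive)
  have pZ_pos: "0 < pZ z" if "z \<in> Zs" for z
    using that by (auto simp: Zs_def pZ_def pmf_positive)
  have row: "(\<Sum>z\<in>Zs. (pTZ (t, z))\<^sup>2 / (pT t * pZ z)) \<le> (1 + \<kappa>\<^sup>2) * pT t" if t: "t \<in> Ts" for t
  proof -
    define c where "c = (\<lambda>z. pTZ (t, z) / pZ z)"
    have mean: "pT t = (\<Sum>z\<in>Zs. pZ z * c z)"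
      unfolding pT_def pmf_map_eq_sum_joint[OF fin, of T t Z] Zs_def[symmetric]
      by (intro sum.cong) (auto dest: pZ_pos simp: c_def pTZ_def)
    have "(\<Sum>z\<in>Zs. pZ z * (c z)\<^sup>2) \<le> (1 + \<kappa>\<^sup>2) * (pT t)\<^sup>2"
    proof (rule sum_weighted_sq_le_of_ratio_bounded[OF finZ _ _ mean \<open>0 \<le> \<kappa>\<close>])
      show "(\<Sum>z\<in>Zs. pZ z) = 1"
        using fin by (simp add: Zs_def pZ_def sum_pmf_eq_1)
      show "c z \<le> (1 + \<kappa>) * c z'" if "z \<in> Zs" "z' \<in> Zs" for z z'
        using ratio[of z z' t] pZ_pos[OF that(1)] pZ_pos[OF that(2)] that
        by (simp add: c_def Zs_def pTZ_def pZ_def field_simps)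
    qed (auto dest: pZ_pos)
    moreover have "(\<Sum>z\<in>Zs. (pTZ (t, z))\<^sup>2 / (pT t * pZ z)) = (\<Sum>z\<in>Zs. pZ z * (c z)\<^sup>2) / pT t"
      unfolding sum_divide_distrib using pT_pos[OF t]
      by (intro sum.cong) (auto dest: pZ_pos simp: c_def field_simps power2_eq_square)
    ultimately show ?thesis
      using pT_pos[OF t] by (simp add: divide_le_eq power2_eq_square)
  qed
  have "MI M T Z \<le> ((\<Sum>t\<in>Ts. \<Sum>z\<in>Zs. (pTZ (t, z))\<^sup>2 / (pT t * pZ z)) - 1) / ln 2"
    unfolding Ts_def Zs_def pTZ_def pT_def pZ_def by (rule MI_le_chi_square[OF fin])
  also have "\<dots> \<le> ((\<Sum>t\<in>Ts. (1 + \<kappa>\<^sup>2) * pT t) - 1) / ln 2"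
    by (intro divide_right_mono diff_right_mono sum_mono row) auto
  also have "(\<Sum>t\<in>Ts. (1 + \<kappa>\<^sup>2) * pT t) = 1 + \<kappa>\<^sup>2"
    using fin by (simp add: Ts_def pT_def sum_distrib_left[symmetric] sum_pmf_eq_1)
  finally show ?thesis
    by simp
qed

section \<open>Protocols whose transcript barely depends on the inputs\<close>

lemma finite_set_pmf_transcript:
  "valid_protocol P \<Longrightarrow> finite (set_pmf (transcript P x y))"
  unfolding valid_protocol_def transcript_def by auto

lemma set_pmf_joint_subset:
  "set_pmf (joint mu P) \<subseteq> UNIV \<times> UNIV \<times> (\<Union>x y. set_pmf (transcript P x y))"
  unfolding joint_def by (auto split: prod.splits) metis

lemma finite_set_pmf_joint:
  assumes "valid_protocol P"
  shows "finite (set_pmf (joint mu P))"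
  by (rule finite_subset[OF set_pmf_joint_subset]) (use finite_set_pmf_transcript[OF assms] in auto)

lemma pmf_map_joint:
  "pmf (map_pmf g (joint mu P)) v = (\<Sum>xy\<in>UNIV.
      pmf mu xy * pmf (map_pmf (\<lambda>t. g (fst xy, snd xy, t)) (transcript P (fst xy) (snd xy))) v)"
proof -
  have "map_pmf g (joint mu P) =
      bind_pmf mu (\<lambda>xy. map_pmf (\<lambda>t. g (fst xy, snd xy, t)) (transcript P (fst xy) (snd xy)))"
    unfolding joint_def map_bind_pmf
    by (intro bind_pmf_cong refl) (auto simp: map_pmf_def bind_assoc_pmf bind_return_pmf split: prod.splits)
  then show ?thesis
    by (simp add: pmf_bind integral_measure_pmf_real[of UNIV] mult.commute)
qed

lemma pmf_map_Pair_const: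
  "pmf (map_pmf (\<lambda>t. (t, c)) Q) (t', c') = (if c = c' then pmf Q t' else 0)"
proof -
  have "inj (\<lambda>t. (t, c))"
    by (auto simp: inj_on_def)
  then show ?thesis
    using pmf_map_inj'[of "\<lambda>t. (t, c)" Q t'] by (auto simp: pmf_eq_0_set_pmf)
qed

lemma pmf_joint_transcript_label:
  "pmf (map_pmf (\<lambda>w. (rvPi w, f (rvX w, rvY w))) (joint mu P)) (t, v) =
     (\<Sum>xy\<in>UNIV. if f xy = v then pmf mu xy * pmf (transcript P (fst xy) (snd xy)) t else 0)"
  unfolding pmf_map_joint
  by (intro sum.cong refl) (simp add: rvPi_def rvX_def rvY_def pmf_map_Pair_const)

lemma pmf_joint_label:
  "pmf (map_pmf (\<lambda>w. f (rvX w, rvY w)) (joint mu P)) v = (\<Sum>xy\<in>UNIV. if f xy = v then pmf mu xy else 0)"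
  unfolding pmf_map_joint by (intro sum.cong refl) (simp add: rvX_def rvY_def)

lemma MI_transcript_le_of_ratio:
  fixes h :: "bool \<times> bool \<Rightarrow> 'z::countable"
  assumes valid: "valid_protocol P" and "0 \<le> \<kappa>" and "inj h"
    and ratio: "\<And>x y x' y' t. pmf (transcript P x y) t \<le> (1 + \<kappa>) * pmf (transcript P x' y') t"
  shows "MI (joint mu P) rvPi (\<lambda>w. h (rvX w, rvY w)) \<le> \<kappa>\<^sup>2 / ln 2"
proof (rule MI_le_of_conditional_ratio[OF finite_set_pmf_joint[OF valid] \<open>0 \<le> \<kappa>\<close>])
  fix t z z'
  assume "z \<in> (\<lambda>w. h (rvX w, rvY w)) ` set_pmf (joint mu P)"
    and "z' \<in> (\<lambda>w. h (rvX w, rvY w)) ` set_pmf (joint mu P)"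
  then obtain xy xy' where [simp]: "z = h xy" "z' = h xy'"
    by auto
  have "pmf (transcript P (fst xy) (snd xy)) t * (pmf mu xy * pmf mu xy')
      \<le> (1 + \<kappa>) * pmf (transcript P (fst xy') (snd xy')) t * (pmf mu xy * pmf mu xy')"
    by (intro mult_right_mono ratio) auto
  then show "pmf (map_pmf (\<lambda>w. (rvPi w, h (rvX w, rvY w))) (joint mu P)) (t, z) *
       pmf (map_pmf (\<lambda>w. h (rvX w, rvY w)) (joint mu P)) z'
     \<le> (1 + \<kappa>) * (pmf (map_pmf (\<lambda>w. (rvPi w, h (rvX w, rvY w))) (joint mu P)) (t, z') *
       pmf (map_pmf (\<lambda>w. h (rvX w, rvY w)) (joint mu P)) z)"
    unfolding pmf_joint_transcript_label pmf_joint_label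
    by (simp add: inj_eq[OF \<open>inj h\<close>] if_distrib[of "\<lambda>c. _ * c"] cong: if_cong) (simp add: algebra_simps)
qed

lemma
  assumes "valid_protocol P" and "0 \<le> \<kappa>"
    and "\<And>x y x' y' t. pmf (transcript P x y) t \<le> (1 + \<kappa>) * pmf (transcript P x' y') t"
  shows IC_prot_le_of_transcript_ratio: "IC_prot mu P \<le> 2 * \<kappa>\<^sup>2 / ln 2"
    and ICext_prot_le_of_transcript_ratio: "ICext_prot mu P \<le> \<kappa>\<^sup>2 / ln 2"
proof -
  note fin = finite_set_pmf_joint[OF assms(1), of mu]
  have XY: "MI (joint mu P) rvPi (\<lambda>w. (rvX w, rvY w)) \<le> \<kappa>\<^sup>2 / ln 2"
    using MI_transcript_le_of_ratio[OF assms(1,2), where h = "\<lambda>p. p"] assms(3) by simp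
  have YX: "MI (joint mu P) rvPi (\<lambda>w. (rvY w, rvX w)) \<le> \<kappa>\<^sup>2 / ln 2"
    using MI_transcript_le_of_ratio[OF assms(1,2), where h = prod.swap] assms(3) by simp
  show "IC_prot mu P \<le> 2 * \<kappa>\<^sup>2 / ln 2"
    using CMI_le_MI[OF fin, of rvPi rvX rvY] CMI_le_MI[OF fin, of rvPi rvY rvX] XY YX
    unfolding IC_prot_def by simp
  show "ICext_prot mu P \<le> \<kappa>\<^sup>2 / ln 2"
    using XY unfolding ICext_prot_def .
qed

section \<open>A noisy protocol for AND\<close>

lemma map_pmf_conj_pair_bernoulli:
  assumes "0 \<le> p" "p \<le> 1" "0 \<le> q" "q \<le> 1"
  shows "map_pmf (\<lambda>(a, b). a \<and> b) (pair_pmf (bernoulli_pmf p) (bernoulli_pmf q)) = bernoulli_pmf (p * q)"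
proof (rule pmf_eqI)
  fix v :: bool
  have "pmf (map_pmf (\<lambda>(a, b). a \<and> b) (pair_pmf (bernoulli_pmf p) (bernoulli_pmf q))) v
      = (\<Sum>ab\<in>{ab. (fst ab \<and> snd ab) = v}. pmf (pair_pmf (bernoulli_pmf p) (bernoulli_pmf q)) ab)"
    by (subst pmf_map_eq_sum[of UNIV]) (auto simp: case_prod_beta)
  also have "\<dots> = pmf (bernoulli_pmf (p * q)) v"
  proof (cases v)
    case True
    then have "{ab. (fst ab \<and> snd ab) = v} = {(True, True)}"
      by auto
    then show ?thesis
      using True assms by (simp add: pmf_pair mult_le_one)
  next
    case False
    then have "{ab. (fst ab \<and> snd ab) = v} = {(True, False), (False, True), (False, False)}"
      by auto
    then show ?thesis
      using False assms by (simp add: pmf_pair mult_le_one algebra_simps)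
  qed
  finally show "pmf (map_pmf (\<lambda>(a, b). a \<and> b) (pair_pmf (bernoulli_pmf p) (bernoulli_pmf q))) v
      = pmf (bernoulli_pmf (p * q)) v" .
qed

text \<open>A seed encodes two independent coins, with biases \<open>p1\<close> and \<open>p0 / p1\<close>, as the two low bits
  of a number. Reading the first coin, or the conjunction of both, lets a party send a bit of
  bias \<open>p1\<close> or \<open>p0\<close> depending on its input.\<close>
definition coin_seed :: "real \<Rightarrow> real \<Rightarrow> nat pmf" where
  "coin_seed p0 p1 = map_pmf (\<lambda>(a, b). (if a then 1 else 0) + (if b then 2 else 0))
     (pair_pmf (bernoulli_pmf p1) (bernoulli_pmf (p0 / p1)))"

definition coin_msg :: "bool \<Rightarrow> nat \<Rightarrow> bool" where
  "coin_msg x s = (if x then odd s else s = 3)"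

lemma map_pmf_coin_msg:
  assumes "0 \<le> p0" "p0 \<le> p1" "p1 \<le> 1"
  shows "map_pmf (coin_msg x) (coin_seed p0 p1) = bernoulli_pmf (if x then p1 else p0)"
proof (cases x)
  case True
  then have "coin_msg x \<circ> (\<lambda>(a, b). (if a then 1 else 0) + (if b then 2 else 0)) = fst"
    by (auto simp: coin_msg_def fun_eq_iff)
  then show ?thesis
    using True by (simp add: coin_seed_def pmf.map_comp map_fst_pair_pmf)
next
  case False
  then have "coin_msg x \<circ> (\<lambda>(a, b). (if a then 1 else 0) + (if b then 2 else 0)) = (\<lambda>(a, b). a \<and> b)"
    by (auto simp: coin_msg_def fun_eq_iff)
  moreover have "0 \<le> p0 / p1" "p0 / p1 \<le> 1" "p1 * (p0 / p1) = p0"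
    using assms by (auto simp: divide_le_eq_1)
  ultimately show ?thesis
    using False assms by (simp add: coin_seed_def pmf.map_comp map_pmf_conj_pair_bernoulli)
qed

definition noisy_and_protocol :: "real \<Rightarrow> real \<Rightarrow> real \<Rightarrow> real \<Rightarrow> protocol" where
  "noisy_and_protocol a0 a1 b0 b1 =
     \<lparr> p_pub = return_pmf 0, p_privA = coin_seed a0 a1, p_privB = coin_seed b0 b1,
       p_speaker = (\<lambda>r h. if h = [] then Some Alice else if length h = 1 then Some Bob else None),
       p_msgA = (\<lambda>x r s h. coin_msg x s), p_msgB = (\<lambda>y r s h. coin_msg y s),
       p_out = (\<lambda>r h. h = [True, True]), p_len = 2 \<rparr>"

lemma valid_noisy_and_protocol: "valid_protocol (noisy_and_protocol a0 a1 b0 b1)"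
  by (simp add: valid_protocol_def noisy_and_protocol_def coin_seed_def)

lemma pmf_bernoulli_input_le:
  assumes "0 \<le> p0" "p0 \<le> p1" "p1 \<le> 1" "0 \<le> \<kappa>"
    and "p1 \<le> (1 + \<kappa>) * p0" "1 - p0 \<le> (1 + \<kappa>) * (1 - p1)"
  shows "pmf (bernoulli_pmf (if x then p1 else p0)) u \<le> (1 + \<kappa>) * pmf (bernoulli_pmf (if x' then p1 else p0)) u"
proof -
  have le: "q \<le> (1 + \<kappa>) * q" if "0 \<le> q" for q :: real
    using that assms(4) by (simp add: algebra_simps)
  have "p0 \<le> (1 + \<kappa>) * p0" "p1 \<le> (1 + \<kappa>) * p1" "1 - p0 \<le> (1 + \<kappa>) * (1 - p0)" "1 - p1 \<le> (1 + \<kappa>) * (1 - p1)"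
    using assms by (intro le; linarith)+
  then show ?thesis
    using assms by (cases x; cases x'; cases u) simp_all
qed

locale noisy_and =
  fixes a0 a1 b0 b1 :: real
  assumes a: "0 \<le> a0" "a0 \<le> a1" "a1 \<le> 1" and b: "0 \<le> b0" "b0 \<le> b1" "b1 \<le> 1"
begin

abbreviation "P \<equiv> noisy_and_protocol a0 a1 b0 b1"
abbreviation "pA x \<equiv> if x then a1 else a0"
abbreviation "pB y \<equiv> if y then b1 else b0"

lemma transcript:
  "transcript P x y = map_pmf (\<lambda>(u, v). (0, [u, v])) (pair_pmf (bernoulli_pmf (pA x)) (bernoulli_pmf (pB y)))"
proof -
  have run: "run_bits P x y r s s' (p_len P) [] = [coin_msg x s, coin_msg y s']" for r s s'
    by (simp add: noisy_and_protocol_def numeral_2_eq_2)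
  have "transcript P x y = bind_pmf (coin_seed a0 a1) (\<lambda>s. bind_pmf (coin_seed b0 b1)
      (\<lambda>s'. return_pmf (0::nat, [coin_msg x s, coin_msg y s'])))"
    unfolding transcript_def run by (simp add: noisy_and_protocol_def bind_return_pmf)
  also have "\<dots> = map_pmf (\<lambda>(u, v). (0, [u, v]))
      (pair_pmf (map_pmf (coin_msg x) (coin_seed a0 a1)) (map_pmf (coin_msg y) (coin_seed b0 b1)))"
    by (simp add: pair_pmf_def map_pmf_def bind_assoc_pmf bind_return_pmf)
  finally show ?thesis
    using a b by (simp add: map_pmf_coin_msg)
qed

lemma output_distribution:
  "map_pmf (output_of P) (transcript P x y) = bernoulli_pmf (pA x * pB y)"
proof -
  have "output_of P \<circ> (\<lambda>(u, v). (0, [u, v])) = (\<lambda>(u, v). u \<and> v)"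
    by (auto simp: output_of_def noisy_and_protocol_def fun_eq_iff)
  then show ?thesis
    using a b by (simp add: transcript pmf.map_comp map_pmf_conj_pair_bernoulli)
qed

lemma performs_AND2:
  assumes "1 - \<eta> \<le> a1 * b1" "a0 * b1 \<le> \<eta>" "a1 * b0 \<le> \<eta>"
  shows "performs P AND2 \<eta>"
  unfolding performs_def
proof (intro allI)
  fix x y
  have "a0 * b0 \<le> a0 * b1"
    using a b by (intro mult_left_mono) auto
  moreover have "0 \<le> pA x * pB y" "pA x * pB y \<le> 1"
    using a b by (auto intro: mult_le_one)
  ultimately have "pmf (bernoulli_pmf (pA x * pB y)) (\<not> AND2 x y) \<le> \<eta>"
    using assms by (auto simp: AND2_def)
  moreover have "{t. output_of P t \<noteq> AND2 x y} = output_of P -` {\<not> AND2 x y}"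
    by auto
  ultimately show "measure_pmf.prob (transcript P x y) {t. output_of P t \<noteq> AND2 x y} \<le> \<eta>"
    by (simp add: measure_pmf_single output_distribution flip: measure_map_pmf)
qed

lemma transcript_ratio:
  assumes "0 \<le> \<kappa>" "a1 \<le> (1 + \<kappa>) * a0" "1 - a0 \<le> (1 + \<kappa>) * (1 - a1)"
    "b1 \<le> (1 + \<kappa>) * b0" "1 - b0 \<le> (1 + \<kappa>) * (1 - b1)"
  shows "pmf (transcript P x y) t \<le> (1 + \<kappa>)\<^sup>2 * pmf (transcript P x' y') t"
proof (cases "t \<in> range (\<lambda>(u, v). (0::nat, [u, v]))")
  case True
  then obtain u v where t: "t = (\<lambda>(u, v). (0::nat, [u, v])) (u, v)"
    by auto
  have inj: "inj (\<lambda>(u::bool, v::bool). (0::nat, [u, v]))"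
    by (auto simp: inj_on_def)
  have "pmf (bernoulli_pmf (pA x)) u * pmf (bernoulli_pmf (pB y)) v
      \<le> ((1 + \<kappa>) * pmf (bernoulli_pmf (pA x')) u) * ((1 + \<kappa>) * pmf (bernoulli_pmf (pB y')) v)"
    using a b assms by (intro mult_mono pmf_bernoulli_input_le) auto
  then show ?thesis
    unfolding t transcript pmf_map_inj'[OF inj] pmf_pair by (simp add: power2_eq_square algebra_simps)
next
  case False
  then have "pmf (map_pmf (\<lambda>(u, v). (0::nat, [u, v])) Q) t = 0" for Q :: "(bool \<times> bool) pmf"
    by (intro pmf_map_outside) auto
  then show ?thesis
    by (simp add: transcript)
qed

end

text \<open>Alice sends a bit of bias \<open>3/4\<close> or \<open>3/4 \<cdot> (1 - 2e)/(1 + 2e)\<close>, Bob one of bias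
  \<open>2/3 \<cdot> (1 \<plusminus> 2e)\<close>; the acceptance probability is \<open>1/2 + e\<close> on input \<open>(1, 1)\<close> and at most
  \<open>1/2 - e\<close> elsewhere, while all biases (and their complements) agree up to a factor \<open>1 + 16e\<close>.\<close>
definition and_protocol :: "real \<Rightarrow> protocol" where
  "and_protocol e =
     noisy_and_protocol (3/4 * ((1 - 2*e) / (1 + 2*e))) (3/4) (2/3 * (1 - 2*e)) (2/3 * (1 + 2*e))"

lemma noisy_and_and_protocol:
  assumes "0 < e" "e \<le> 1/16"
  shows "noisy_and (3/4 * ((1 - 2*e) / (1 + 2*e))) (3/4) (2/3 * (1 - 2*e)) (2/3 * (1 + 2*e))"
  using assms by unfold_locales (auto simp: field_simps)

lemma valid_and_protocol: "valid_protocol (and_protocol e)"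
  unfolding and_protocol_def by (rule valid_noisy_and_protocol)

lemma performs_and_protocol:
  assumes "0 < e" "e \<le> 1/16"
  shows "performs (and_protocol e) AND2 (1/2 - e)"
  unfolding and_protocol_def
  by (rule noisy_and.performs_AND2[OF noisy_and_and_protocol[OF assms]]) (use assms in \<open>auto simp: field_simps\<close>)

lemma transcript_and_protocol_ratio:
  assumes "0 < e" "e \<le> 1/16"
  shows "pmf (transcript (and_protocol e) x y) t \<le> (1 + 48*e) * pmf (transcript (and_protocol e) x' y') t"
proof -
  have "pmf (transcript (and_protocol e) x y) t \<le> (1 + 16*e)\<^sup>2 * pmf (transcript (and_protocol e) x' y') t"
    unfolding and_protocol_def
    by (rule noisy_and.transcript_ratio[OF noisy_and_and_protocol[OF assms]])
       (use assms in \<open>auto simp: field_simps power2_eq_square\<close>)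
  also have "\<dots> \<le> (1 + 48*e) * pmf (transcript (and_protocol e) x' y') t"
    using assms by (intro mult_right_mono) (auto simp: power2_eq_square field_simps)
  finally show ?thesis .
qed

lemma
  assumes "0 < e" "e \<le> 1/16"
  shows IC_prot_and_protocol_le: "IC_prot mu (and_protocol e) \<le> 10000 * e\<^sup>2"
    and ICext_prot_and_protocol_le: "ICext_prot mu (and_protocol e) \<le> 10000 * e\<^sup>2"
proof -
  note ratio = transcript_and_protocol_ratio[OF assms]
  have "(48 * e)\<^sup>2 / ln 2 \<le> (48 * e)\<^sup>2 / (2/3)"
    using ln2_ge_two_thirds by (intro divide_left_mono) auto
  also have "\<dots> = 3456 * e\<^sup>2"
    by (simp add: power2_eq_square)
  finally have "(48 * e)\<^sup>2 / ln 2 \<le> 3456 * e\<^sup>2" .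
  moreover have "2 * (48 * e)\<^sup>2 / ln 2 = 2 * ((48 * e)\<^sup>2 / ln 2)"
    by simp
  ultimately show "IC_prot mu (and_protocol e) \<le> 10000 * e\<^sup>2" "ICext_prot mu (and_protocol e) \<le> 10000 * e\<^sup>2"
    using IC_prot_le_of_transcript_ratio[OF valid_and_protocol _ ratio, of mu]
      ICext_prot_le_of_transcript_ratio[OF valid_and_protocol _ ratio, of mu] assms
      zero_le_power2[of e]
    by linarith+
qed

section \<open>The lower bound via the Jensen--Shannon divergence\<close>

lemma mult_ln_divide_ge:
  fixes p m :: real
  assumes "0 \<le> p" "0 < m"
  shows "2 * p - 2 * sqrt (p * m) \<le> p * ln (p / m)"
proof (cases "p = 0")
  case False
  then have p: "0 < p"
    using assms by simp
  have "ln (p / m) = - 2 * ln (sqrt (m / p))"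
    using p assms by (simp add: ln_sqrt ln_div)
  moreover have "ln (sqrt (m / p)) \<le> sqrt (m / p) - 1"
    using p assms by (intro ln_le_minus_one) simp
  ultimately have "p * (2 - 2 * sqrt (m / p)) \<le> p * ln (p / m)"
    using p by (intro mult_left_mono) auto
  moreover have "p * sqrt (m / p) = sqrt (p * m)"
    using p by (simp add: real_sqrt_mult real_sqrt_divide field_simps)
  ultimately show ?thesis
    by (simp add: algebra_simps)
qed simp

lemma quadratic_mean_gap_ge:
  fixes a b s :: real
  assumes "s\<^sup>2 = (a\<^sup>2 + b\<^sup>2) / 2" "0 < a\<^sup>2 + b\<^sup>2"
  shows "(a\<^sup>2 - b\<^sup>2)\<^sup>2 / (4 * (a\<^sup>2 + b\<^sup>2)) \<le> 2 * (a\<^sup>2 + b\<^sup>2) - 2 * s * (a + b)"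
proof -
  define u v where "u = a + b" and "v = a - b"
  have uv: "2 * (a\<^sup>2 + b\<^sup>2) = u\<^sup>2 + v\<^sup>2" "(a\<^sup>2 - b\<^sup>2)\<^sup>2 = u\<^sup>2 * v\<^sup>2"
    by (simp_all add: u_def v_def power2_eq_square algebra_simps)
  then have four: "4 * (a\<^sup>2 + b\<^sup>2) = 2 * (u\<^sup>2 + v\<^sup>2)" and pos: "0 < u\<^sup>2 + v\<^sup>2"
    using assms(2) by argo+
  have "(a\<^sup>2 - b\<^sup>2)\<^sup>2 / (4 * (a\<^sup>2 + b\<^sup>2)) = u\<^sup>2 * v\<^sup>2 / (2 * (u\<^sup>2 + v\<^sup>2))"
    by (simp only: uv(2) four)
  also have "\<dots> \<le> (u\<^sup>2 + v\<^sup>2) * v\<^sup>2 / (2 * (u\<^sup>2 + v\<^sup>2))"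
    by (intro divide_right_mono mult_right_mono) auto
  also have "\<dots> = v\<^sup>2 / 2"
    using pos by (subst mult.commute[of 2], subst nonzero_mult_divide_mult_cancel_left) auto
  also have "\<dots> \<le> 2 * (a\<^sup>2 + b\<^sup>2) - 2 * s * (a + b)"
    using zero_le_power2[of "u - 2 * s"] uv(1) assms(1)
    by (simp add: u_def[symmetric] power2_eq_square algebra_simps)
  finally show ?thesis .
qed

text \<open>Summed over all outcomes, \<open>js_term\<close> gives twice the Jensen--Shannon divergence (in bits)
  of two distributions.\<close>
definition js_term :: "real \<Rightarrow> real \<Rightarrow> real" where
  "js_term p q = p * log 2 (2 * p / (p + q)) + q * log 2 (2 * q / (p + q))"

lemma js_term_ge:
  assumes "0 \<le> p" "0 \<le> q"
  shows "(p - q)\<^sup>2 / (p + q) \<le> 4 * ln 2 * js_term p q"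
proof (cases "p + q = 0")
  case False
  then have pq: "0 < p + q"
    using assms by simp
  define m where "m = (p + q) / 2"
  have m: "0 < m"
    using pq by (simp add: m_def)
  have "ln 2 * js_term p q = p * ln (p / m) + q * ln (q / m)"
    by (simp add: js_term_def m_def log_def algebra_simps)
  moreover have "2 * (p + q) - 2 * sqrt m * (sqrt p + sqrt q) \<le> p * ln (p / m) + q * ln (q / m)"
    using mult_ln_divide_ge[OF assms(1) m] mult_ln_divide_ge[OF assms(2) m]
    by (simp add: real_sqrt_mult algebra_simps)
  moreover have "(p - q)\<^sup>2 / (4 * (p + q)) \<le> 2 * (p + q) - 2 * sqrt m * (sqrt p + sqrt q)"
    using quadratic_mean_gap_ge[where a = "sqrt p" and b = "sqrt q" and s = "sqrt m"] assms pq
    by (simp add: m_def mult.assoc)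
  moreover have "(p - q)\<^sup>2 / (p + q) = 4 * ((p - q)\<^sup>2 / (4 * (p + q)))"
    using pq by (simp add: field_simps)
  ultimately have "(p - q)\<^sup>2 / (p + q) \<le> 4 * (ln 2 * js_term p q)"
    by argo
  then show ?thesis
    by (simp only: mult.assoc)
next
  case True
  then have "p = 0" "q = 0"
    using assms by auto
  then show ?thesis
    by (simp add: js_term_def)
qed

lemma js_term_nonneg:
  assumes "0 \<le> p" "0 \<le> q"
  shows "0 \<le> js_term p q"
proof -
  have "0 \<le> (p - q)\<^sup>2 / (p + q)"
    using assms by simp
  then have "0 \<le> (4 * ln 2) * js_term p q"
    using js_term_ge[OF assms] by linarith
  then show ?thesis
    using ln_gt_zero[of "2::real"] by (auto simp: zero_le_mult_iff)
qed

lemma measure_pmf_eq_sum: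
  assumes "finite S" "set_pmf Q \<subseteq> S"
  shows "measure (measure_pmf Q) A = (\<Sum>t\<in>S \<inter> A. pmf Q t)"
proof -
  have "measure (measure_pmf Q) A = measure (measure_pmf Q) ((S \<inter> A) \<inter> set_pmf Q)"
    using assms(2) by (simp add: measure_Int_set_pmf Int_absorb1 Int_commute Int_left_commute)
  also have "\<dots> = (\<Sum>t\<in>S \<inter> A. pmf Q t)"
    using assms(1) by (simp add: measure_Int_set_pmf measure_measure_pmf_finite)
  finally show ?thesis .
qed

text \<open>A Pinsker-type inequality; the key step is Cauchy--Schwarz in the form
  \<open>(\<Sum> (p - q))\<^sup>2 \<le> \<Sum> (p - q)\<^sup>2 / (p + q) \<cdot> \<Sum> (p + q)\<close>.\<close>
lemma sum_js_term_ge: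
  assumes fin: "finite S" and "set_pmf Q1 \<subseteq> S" "set_pmf Q2 \<subseteq> S"
  shows "(measure Q1 A - measure Q2 A)\<^sup>2 / (8 * ln 2) \<le> (\<Sum>t\<in>S. js_term (pmf Q1 t) (pmf Q2 t))"
proof -
  define p q where "p = pmf Q1" and "q = pmf Q2"
  define B where "B = S \<inter> A"
  have finB: "finite B"
    using fin by (simp add: B_def)
  define r where "r = (\<lambda>t. (p t - q t)\<^sup>2 / (p t + q t))"
  have "measure Q1 A - measure Q2 A = (\<Sum>t\<in>B. p t - q t)"
    using measure_pmf_eq_sum[OF fin assms(2)] measure_pmf_eq_sum[OF fin assms(3)]
    by (simp add: B_def p_def q_def sum_subtractf)
  also have "(\<Sum>t\<in>B. p t - q t) = (\<Sum>t\<in>B. (p t - q t) / sqrt (p t + q t) * sqrt (p t + q t))"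
    by (intro sum.cong refl) (auto simp: p_def q_def add_nonneg_eq_0_iff)
  finally have "(measure Q1 A - measure Q2 A)\<^sup>2 \<le> (\<Sum>t\<in>B. r t) * (\<Sum>t\<in>B. p t + q t)"
    using Cauchy_Schwarz_ineq_sum[of "\<lambda>t. (p t - q t) / sqrt (p t + q t)" "\<lambda>t. sqrt (p t + q t)" B]
    by (simp add: r_def p_def q_def power_divide)
  also have "\<dots> \<le> (\<Sum>t\<in>B. r t) * 2"
  proof (intro mult_left_mono)
    have "(\<Sum>t\<in>B. p t) \<le> 1" "(\<Sum>t\<in>B. q t) \<le> 1"
      using measure_pmf_eq_sum[OF fin assms(2)] measure_pmf_eq_sum[OF fin assms(3)]
        measure_pmf.prob_le_1[of Q1 A] measure_pmf.prob_le_1[of Q2 A]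
      by (simp_all add: B_def p_def q_def)
    then show "(\<Sum>t\<in>B. p t + q t) \<le> 2"
      by (simp add: sum.distrib)
    show "0 \<le> (\<Sum>t\<in>B. r t)"
      by (intro sum_nonneg) (simp add: r_def p_def q_def)
  qed
  also have "\<dots> \<le> (\<Sum>t\<in>S. r t) * 2"
    using fin by (intro mult_right_mono sum_mono2) (auto simp: B_def r_def p_def q_def)
  also have "\<dots> \<le> (\<Sum>t\<in>S. 4 * ln 2 * js_term (p t) (q t)) * 2"
    using js_term_ge by (intro mult_right_mono sum_mono) (auto simp: r_def p_def q_def)
  also have "\<dots> = 8 * ln 2 * (\<Sum>t\<in>S. js_term (pmf Q1 t) (pmf Q2 t))"
    by (simp add: p_def q_def flip: sum_distrib_left)
  finally show ?thesis
    by (simp add: pos_divide_le_eq mult.commute)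
qed

definition uniform_inputs :: "(bool \<times> bool) pmf" where
  "uniform_inputs = pmf_of_set UNIV"

lemma pmf_uniform_inputs: "pmf uniform_inputs xy = 1/4"
  by (simp add: uniform_inputs_def)

lemma sum_UNIV_bool_pair:
  "(\<Sum>xy\<in>UNIV. g xy) = g (False, False) + g (False, True) + g (True, False) + g (True, True)"
proof -
  have UNIV_eq: "(UNIV :: (bool \<times> bool) set) = {(False, False), (False, True), (True, False), (True, True)}"
    by (auto simp: UNIV_bool)
  show ?thesis
    unfolding UNIV_eq by (simp add: add.assoc)
qed

lemma CMI_uniform_inputs_eq:
  assumes "valid_protocol P"
  defines "Ts \<equiv> \<Union>x y. set_pmf (transcript P x y)"
  shows "CMI (joint uniform_inputs P) rvPi rvX rvY =
    1/4 * (\<Sum>y\<in>UNIV. \<Sum>t\<in>Ts. js_term (pmf (transcript P False y) t) (pmf (transcript P True y) t))"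
proof -
  let ?J = "joint uniform_inputs P"
  define Q where "Q x y = pmf (transcript P x y)" for x y
  have finT: "finite Ts"
    using finite_set_pmf_transcript[OF assms(1)] by (simp add: Ts_def)
  have Pabc: "pmf (map_pmf (\<lambda>w. (rvPi w, rvX w, rvY w)) ?J) (t, x, y) = Q x y t / 4" for t x y
    using pmf_joint_transcript_label[where f = "\<lambda>xy. xy" and v = "(x, y)"]
    by (simp add: sum_UNIV_bool_pair pmf_uniform_inputs Q_def)
  have Pac: "pmf (map_pmf (\<lambda>w. (rvPi w, rvY w)) ?J) (t, y) = (Q False y t + Q True y t) / 4" for t y
    using pmf_joint_transcript_label[where f = snd and v = y]
    by (cases y) (simp_all add: sum_UNIV_bool_pair pmf_uniform_inputs Q_def)
  have Pbc: "pmf (map_pmf (\<lambda>w. (rvX w, rvY w)) ?J) (x, y) = 1/4" for x y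
    using pmf_joint_label[where f = "\<lambda>xy. xy" and v = "(x, y)"]
    by (simp add: sum_UNIV_bool_pair pmf_uniform_inputs)
  have Pc: "pmf (map_pmf rvY ?J) y = 1/2" for y
    using pmf_joint_label[where f = snd and v = y]
    by (cases y) (simp_all add: sum_UNIV_bool_pair pmf_uniform_inputs)
  define F where "F = (\<lambda>(t, x, y). pmf (map_pmf (\<lambda>w. (rvPi w, rvX w, rvY w)) ?J) (t, x, y) *
     log 2 (pmf (map_pmf (\<lambda>w. (rvPi w, rvX w, rvY w)) ?J) (t, x, y) /
      (pmf (map_pmf (\<lambda>w. (rvPi w, rvY w)) ?J) (t, y) *
       (pmf (map_pmf (\<lambda>w. (rvX w, rvY w)) ?J) (x, y) / pmf (map_pmf rvY ?J) y))))"
  have F: "F (t, x, y) = 1/4 * (Q x y t * log 2 (2 * Q x y t / (Q False y t + Q True y t)))" for t x y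
  proof -
    have "Q x y t / 4 / ((Q False y t + Q True y t) / 4 * (1/4 / (1/2)))
        = 2 * Q x y t / (Q False y t + Q True y t)"
      by (simp add: field_simps)
    then show ?thesis
      by (simp add: F_def Pabc Pac Pbc Pc)
  qed
  have "CMI ?J rvPi rvX rvY = (\<Sum>p\<in>(\<lambda>w. (rvPi w, rvX w, rvY w)) ` set_pmf ?J. F p)"
    unfolding CMI_eq_sum[OF finite_set_pmf_joint[OF assms(1)]] F_def ..
  also have "\<dots> = (\<Sum>p\<in>Ts \<times> UNIV. F p)"
  proof (rule sum.mono_neutral_left)
    show "(\<lambda>w. (rvPi w, rvX w, rvY w)) ` set_pmf ?J \<subseteq> Ts \<times> UNIV"
      using set_pmf_joint_subset by (fastforce simp: Ts_def rvPi_def)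
    show "\<forall>p\<in>Ts \<times> UNIV - (\<lambda>w. (rvPi w, rvX w, rvY w)) ` set_pmf ?J. F p = 0"
      by (auto simp: F_def pmf_eq_0_set_pmf)
  qed (use finT in simp)
  also have "\<dots> = (\<Sum>t\<in>Ts. \<Sum>xy\<in>UNIV. F (t, xy))"
    by (simp add: sum.cartesian_product)
  also have "\<dots> = (\<Sum>t\<in>Ts. 1/4 * (js_term (Q False False t) (Q True False t)
      + js_term (Q False True t) (Q True True t)))"
    by (simp add: sum_UNIV_bool_pair F js_term_def algebra_simps)
  finally show ?thesis
    by (simp add: UNIV_bool Q_def sum.distrib flip: sum_distrib_left sum_divide_distrib)
qed

lemma
  assumes "performs P AND2 (1/2 - e)"
  shows performs_AND2_accept_False_True: "measure (transcript P False True) {t. output_of P t} \<le> 1/2 - e"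
    and performs_AND2_accept_True_True: "1/2 + e \<le> measure (transcript P True True) {t. output_of P t}"
proof -
  have err: "measure (transcript P x y) {t. output_of P t \<noteq> AND2 x y} \<le> 1/2 - e" for x y
    using assms unfolding performs_def by blast
  show "measure (transcript P False True) {t. output_of P t} \<le> 1/2 - e"
    using err[of False True] by (simp add: AND2_def)
  have "{t. output_of P t} = UNIV - {t. \<not> output_of P t}"
    by auto
  then show "1/2 + e \<le> measure (transcript P True True) {t. output_of P t}"
    using err[of True True] measure_pmf.prob_compl[of "{t. \<not> output_of P t}" "transcript P True True"]
    by (simp add: AND2_def)
qed

lemma CMI_uniform_inputs_ge:
  assumes valid: "valid_protocol P" and perf: "performs P AND2 (1/2 - e)" and "0 \<le> e"
  shows "e\<^sup>2 / 8 \<le> CMI (joint uniform_inputs P) rvPi rvX rvY"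
proof -
  define Ts where "Ts = (\<Union>x y. set_pmf (transcript P x y))"
  define JS where "JS y = (\<Sum>t\<in>Ts. js_term (pmf (transcript P False y) t) (pmf (transcript P True y) t))" for y
  define acc where "acc x y = measure (transcript P x y) {t. output_of P t}" for x y
  have finT: "finite Ts"
    using finite_set_pmf_transcript[OF valid] by (simp add: Ts_def)
  have sub: "set_pmf (transcript P x y) \<subseteq> Ts" for x y
    by (auto simp: Ts_def)
  have "2 * e \<le> acc True True - acc False True"
    using performs_AND2_accept_False_True[OF perf] performs_AND2_accept_True_True[OF perf]
    by (simp add: acc_def)
  then have "(2 * e)\<^sup>2 \<le> (acc True True - acc False True)\<^sup>2"
    using \<open>0 \<le> e\<close> by (intro power_mono) auto
  then have "(2 * e)\<^sup>2 \<le> (acc False True - acc True True)\<^sup>2"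
    by (metis power2_commute)
  then have "e\<^sup>2 / 2 \<le> (acc False True - acc True True)\<^sup>2 / 8"
    by (simp add: power_mult_distrib)
  also have "\<dots> \<le> (acc False True - acc True True)\<^sup>2 / (8 * ln 2)"
    using ln_2_less_1 by (intro divide_left_mono) auto
  also have "\<dots> \<le> JS True"
    unfolding acc_def JS_def by (rule sum_js_term_ge[OF finT sub sub])
  finally have "e\<^sup>2 / 2 \<le> JS True" .
  moreover have "0 \<le> JS False"
    unfolding JS_def by (intro sum_nonneg js_term_nonneg) auto
  moreover have "CMI (joint uniform_inputs P) rvPi rvX rvY = 1/4 * (JS False + JS True)"
    unfolding CMI_uniform_inputs_eq[OF valid] by (simp add: UNIV_bool JS_def Ts_def)
  ultimately show ?thesis
    by simp
qed

lemma
  assumes "valid_protocol P" "performs P AND2 (1/2 - e)" "0 \<le> e"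
  shows IC_prot_uniform_inputs_ge: "e\<^sup>2 / 8 \<le> IC_prot uniform_inputs P"
    and ICext_prot_uniform_inputs_ge: "e\<^sup>2 / 8 \<le> ICext_prot uniform_inputs P"
proof -
  note fin = finite_set_pmf_joint[OF assms(1), of uniform_inputs]
  show "e\<^sup>2 / 8 \<le> IC_prot uniform_inputs P"
    using CMI_uniform_inputs_ge[OF assms] CMI_nonneg[OF fin, of rvPi rvY rvX]
    unfolding IC_prot_def by linarith
  show "e\<^sup>2 / 8 \<le> ICext_prot uniform_inputs P"
    using CMI_uniform_inputs_ge[OF assms] CMI_le_MI[OF fin, of rvPi rvX rvY]
    unfolding ICext_prot_def by linarith
qed

lemma IC_le_of_protocol:
  "valid_protocol P \<Longrightarrow> performs P f \<eta> \<Longrightarrow> (\<And>mu. IC_prot mu P \<le> B) \<Longrightarrow> IC f \<eta> \<le> ereal B"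
  unfolding IC_def IC_mu_def by (intro SUP_least INF_lower2[of P]) auto

lemma ICext_le_of_protocol:
  "valid_protocol P \<Longrightarrow> performs P f \<eta> \<Longrightarrow> (\<And>mu. ICext_prot mu P \<le> B) \<Longrightarrow> ICext f \<eta> \<le> ereal B"
  unfolding ICext_def ICext_mu_def by (intro SUP_least INF_lower2[of P]) auto

lemma IC_ge_of_prior:
  "(\<And>P. valid_protocol P \<Longrightarrow> performs P f \<eta> \<Longrightarrow> B \<le> IC_prot mu P) \<Longrightarrow> ereal B \<le> IC f \<eta>"
  unfolding IC_def IC_mu_def by (rule SUP_upper2[of mu]) (auto intro: INF_greatest)

lemma ICext_ge_of_prior:
  "(\<And>P. valid_protocol P \<Longrightarrow> performs P f \<eta> \<Longrightarrow> B \<le> ICext_prot mu P) \<Longrightarrow> ereal B \<le> ICext f \<eta>"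
  unfolding ICext_def ICext_mu_def by (rule SUP_upper2[of mu]) (auto intro: INF_greatest)

theorem corollary2:
  "\<exists>c C eps0 :: real. c > 0 \<and> C > 0 \<and> eps0 > 0 \<and>
     (\<forall>eps. 0 < eps \<and> eps \<le> eps0 \<longrightarrow>
        ereal (c * eps\<^sup>2) \<le> IC AND2 (1/2 - eps) \<and> IC AND2 (1/2 - eps) \<le> ereal (C * eps\<^sup>2) \<and>
        ereal (c * eps\<^sup>2) \<le> ICext AND2 (1/2 - eps) \<and> ICext AND2 (1/2 - eps) \<le> ereal (C * eps\<^sup>2))"
proof -
  have "ereal (1/8 * eps\<^sup>2) \<le> IC AND2 (1/2 - eps) \<and> IC AND2 (1/2 - eps) \<le> ereal (10000 * eps\<^sup>2) \<and>
      ereal (1/8 * eps\<^sup>2) \<le> ICext AND2 (1/2 - eps) \<and> ICext AND2 (1/2 - eps) \<le> ereal (10000 * eps\<^sup>2)"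
    if eps: "0 < eps" "eps \<le> 1/16" for eps
  proof (intro conjI)
    note protocol = valid_and_protocol performs_and_protocol[OF eps]
    show "ereal (1/8 * eps\<^sup>2) \<le> IC AND2 (1/2 - eps)"
      using IC_prot_uniform_inputs_ge eps by (intro IC_ge_of_prior[where mu = uniform_inputs]) auto
    show "IC AND2 (1/2 - eps) \<le> ereal (10000 * eps\<^sup>2)"
      using IC_prot_and_protocol_le[OF eps] by (intro IC_le_of_protocol[OF protocol])
    show "ereal (1/8 * eps\<^sup>2) \<le> ICext AND2 (1/2 - eps)"
      using ICext_prot_uniform_inputs_ge eps by (intro ICext_ge_of_prior[where mu = uniform_inputs]) auto
    show "ICext AND2 (1/2 - eps) \<le> ereal (10000 * eps\<^sup>2)"
      using ICext_prot_and_protocol_le[OF eps] by (intro ICext_le_of_protocol[OF protocol])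
  qed
  then show ?thesis
    by (intro exI[of _ "1/8"] exI[of _ 10000] exI[of _ "1/16"]) auto
qed

end
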